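(* Let $\mathfrak{sl}_2[x,y] := \mathfrak{sl}_2 \otimes_{\mathbb{C}} \mathbb{C}[x,y]$ be the complex Lie algebra of $\mathfrak{sl}_2$-valued polynomials in two commuting variables $x,y$, with bracket $[\xi,\eta](x,y)=[\xi(x,y),\eta(x,y)]$. Consider the Lie algebra $2$-cochain $$c(\xi,\eta) := \operatorname{Tr}\big(\partial_x\xi\,\partial_y\eta - \partial_y\xi\,\partial_x\eta\big)\big|_{x=y=0}, \qquad \xi,\eta\in\mathfrak{sl}_2[x,y].$$ Then $c$ is a $2$-cocycle, and the cup-square of its class in $H^2(\mathfrak{sl}_2[x,y];\mathbb{C})$ is zero in $H^4(\mathfrak{sl}_2[x,y];\mathbb{C})$.
   Context: Lie algebra cohomology is taken with trivial coefficients $\mathbb{C}$ (Chevalley–Eilenberg cohomology), with its cup product. $\partial_x,\partial_y$ denote partial derivatives applied entrywise, $\operatorname{Tr}$ is the trace of $2\times 2$ matrices. *)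

theory Defs
  imports "HOL-Analysis.Analysis"
begin

text \<open>Elements of sl2[x,y] are represented by their coefficient functions:
  a polynomial is a map from exponent pairs (i,j) (monomial x^i y^j) to 2x2 complex
  matrices, with finite support and every coefficient traceless.\<close>

type_synonym mat2 = "complex^2^2"
type_synonym slpoly = "nat \<times> nat \<Rightarrow> mat2"

definition sl2xy :: "slpoly set" where
  "sl2xy = {\<xi>. finite {m. \<xi> m \<noteq> 0} \<and> (\<forall>m. trace (\<xi> m) = 0)}"

definition padd :: "slpoly \<Rightarrow> slpoly \<Rightarrow> slpoly" where
  "padd \<xi> \<eta> = (\<lambda>m. \<xi> m + \<eta> m)"

definition psmul :: "complex \<Rightarrow> slpoly \<Rightarrow> slpoly" where
  "psmul a \<xi> = (\<lambda>m. \<chi> i j. a * (\<xi> m $ i $ j))"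

text \<open>Pointwise commutator of polynomial matrices, computed on coefficients
  (Cauchy product in two variables).\<close>
definition pbracket :: "slpoly \<Rightarrow> slpoly \<Rightarrow> slpoly" where
  "pbracket \<xi> \<eta> = (\<lambda>(k1, k2).
     \<Sum>(a1, a2) \<in> {..k1} \<times> {..k2}.
        \<xi> (a1, a2) ** \<eta> (k1 - a1, k2 - a2) - \<eta> (k1 - a1, k2 - a2) ** \<xi> (a1, a2))"

text \<open>Chevalley--Eilenberg n-cochains with trivial coefficients: functions on
  lists of length n of elements of sl2[x,y], multilinear and alternating.\<close>
definition is_cochain :: "nat \<Rightarrow> (slpoly list \<Rightarrow> complex) \<Rightarrow> bool" where
  "is_cochain n f \<longleftrightarrow>
     (\<forall>xs i u v a b. length xs = n \<and> set xs \<subseteq> sl2xy \<and> i < n \<and> u \<in> sl2xy \<and> v \<in> sl2xy \<longrightarrow>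
        f (xs[i := padd (psmul a u) (psmul b v)]) = a * f (xs[i := u]) + b * f (xs[i := v])) \<and>
     (\<forall>xs i j. length xs = n \<and> set xs \<subseteq> sl2xy \<and> i < j \<and> j < n \<and> xs ! i = xs ! j \<longrightarrow> f xs = 0)"

definition coboundary :: "nat \<Rightarrow> (slpoly list \<Rightarrow> complex) \<Rightarrow> slpoly list \<Rightarrow> complex" where
  "coboundary n f xs =
     (\<Sum>i<n+1. \<Sum>j\<in>{i<..<n+1}.
        (-1) ^ (i + j) * f (pbracket (xs ! i) (xs ! j) # nths xs (- {i, j})))"

text \<open>Cup product of a p-cochain and a q-cochain (shuffle formula).  The sign of the
  (p,q)-shuffle with first block S is (-1)^(sum S - p(p-1)/2).\<close>
definition cup :: "nat \<Rightarrow> nat \<Rightarrow> (slpoly list \<Rightarrow> complex) \<Rightarrow> (slpoly list \<Rightarrow> complex)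
                    \<Rightarrow> slpoly list \<Rightarrow> complex" where
  "cup p q \<alpha> \<beta> xs =
     (\<Sum>S \<in> {S. S \<subseteq> {..<p+q} \<and> card S = p}.
        (-1) ^ (\<Sum>S) * (-1) ^ (p * (p - 1) div 2) * \<alpha> (nths xs S) * \<beta> (nths xs (- S)))"

text \<open>The cochain c(xi,eta) = Tr(d_x xi d_y eta - d_y xi d_x eta) at x=y=0:
  d_x xi at 0 is the coefficient of x (exponent (1,0)), d_y xi at 0 that of y.\<close>
definition c_cochain :: "slpoly list \<Rightarrow> complex" where
  "c_cochain xs = trace ((xs ! 0) (1, 0) ** (xs ! 1) (0, 1) - (xs ! 0) (0, 1) ** (xs ! 1) (1, 0))"

end

theory Submission
  imports Defs
begin

text \<open>Write \<open>a, x, y, x2\<close> for the coefficients of \<open>1, x, y, x\<^sup>2\<close> of a polynomial and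
  \<open>K(u, v) = tr(u v)\<close>, so that \<open>c(\<xi>, \<eta>) = K(x\<^sub>\<xi>, y\<^sub>\<eta>) - K(x\<^sub>\<eta>, y\<^sub>\<xi>)\<close>. The coefficients of
  \<open>[\<xi>, \<eta>]\<close> at \<open>x\<close> and \<open>y\<close> are those of \<open>[a\<^sub>\<xi>, \<eta>] - [a\<^sub>\<eta>, \<xi>]\<close>, and at \<open>x\<^sup>2\<close> there is
  the single extra term \<open>[x\<^sub>\<xi>, x\<^sub>\<eta>]\<close>. Since \<open>K\<close> and the Cartan 3-form
  \<open>\<Phi>(u, v, w) = tr([u, v] w)\<close> are ad-invariant, the constant terms drop out of the coboundary of
  any cochain built from them. Hence \<open>c\<close> is a cocycle, and the coboundary of
  \<open>b(\<xi>, \<eta>, \<zeta>) = -(\<Phi>(y\<^sub>\<xi>, y\<^sub>\<eta>, x2\<^sub>\<zeta>) + cyclic)\<close> is an alternating sum of terms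
  \<open>tr([y, y] [x, x])\<close>, which the \<open>sl\<^sub>2\<close> identity
  \<open>tr([u, v] [w, z]) = 2 (K(u, z) K(v, w) - K(u, w) K(v, z))\<close> turns into \<open>c \<smile> c\<close>.\<close>

lemma matrix_add_rdistrib: "(A + B) ** C = A ** C + B ** (C :: 'a::semiring_1^_^_)"
  by (simp add: matrix_matrix_mult_def vec_eq_iff sum.distrib distrib_right)

lemma matrix_diff_ldistrib: "A ** (B - C) = A ** B - A ** (C :: 'a::ring_1^_^_)"
  by (simp add: matrix_matrix_mult_def vec_eq_iff sum_subtractf right_diff_distrib)

lemma matrix_diff_rdistrib: "(A - B) ** C = A ** C - B ** (C :: 'a::ring_1^_^_)"
  by (simp add: matrix_matrix_mult_def vec_eq_iff sum_subtractf left_diff_distrib)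

lemma matrix_minus_left: "(- A) ** B = - (A ** B :: 'a::ring_1^_^_)"
  by (simp add: matrix_matrix_mult_def vec_eq_iff sum_negf)

lemma trace_minus: "trace (- A) = - trace (A :: 'a::ring_1^'n^'n)"
  by (simp add: trace_def sum_negf)

text \<open>Complex matrices only carry a real scalar multiplication in the library, while
  \<^const>\<open>psmul\<close> scales entrywise; complex linear combinations are therefore written out.\<close>
definition mat_lincomb :: "'a::semiring_1 \<Rightarrow> 'a^'n^'m \<Rightarrow> 'a \<Rightarrow> 'a^'n^'m \<Rightarrow> 'a^'n^'m" where
  "mat_lincomb a U b V = (\<chi> i j. a * U $ i $ j + b * V $ i $ j)"

lemma trace_mult_lincomb:
  "trace (W ** (mat_lincomb a U b V)) = a * trace (W ** U) + b * trace (W ** V)"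
  for W :: "'a::comm_ring_1^'n^'n"
  by (simp add: mat_lincomb_def trace_def matrix_matrix_mult_def sum_distrib_left sum.distrib algebra_simps)

lemma trace_lincomb_mult:
  "trace ((mat_lincomb a U b V) ** W) = a * trace (U ** W) + b * trace (V ** W)"
  for W :: "'a::comm_ring_1^'n^'n"
  by (simp add: mat_lincomb_def trace_def matrix_matrix_mult_def sum_distrib_left sum.distrib algebra_simps)

definition commutator :: "'a::ring_1^'n^'n \<Rightarrow> 'a^'n^'n \<Rightarrow> 'a^'n^'n" where
  "commutator U V = U ** V - V ** U"

lemma commutator_antisym: "commutator V U = - commutator U V"
  by (simp add: commutator_def)

lemma commutator_add_left: "commutator (U + V) W = commutator U W + commutator V W"
  by (simp add: commutator_def matrix_add_ldistrib matrix_add_rdistrib)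

lemma commutator_add_right: "commutator W (U + V) = commutator W U + commutator W V"
  by (simp add: commutator_def matrix_add_ldistrib matrix_add_rdistrib)

lemma commutator_diff_left: "commutator (U - V) W = commutator U W - commutator V W"
  by (simp add: commutator_def matrix_diff_ldistrib matrix_diff_rdistrib)

lemma commutator_diff_right: "commutator W (U - V) = commutator W U - commutator W V"
  by (simp add: commutator_def matrix_diff_ldistrib matrix_diff_rdistrib)

lemma commutator_jacobi:
  "commutator A (commutator U V) = commutator (commutator A U) V + commutator U (commutator A V)"
  by (simp add: commutator_def matrix_diff_ldistrib matrix_diff_rdistrib matrix_mul_assoc)

lemma trace_commutator_mult:
  "trace (commutator U V ** W) = trace (U ** commutator V W)" for U :: "'a::comm_ring_1^'n^'n"
proof -
  have "trace ((V ** U) ** W) = trace (U ** (W ** V))"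
    by (metis matrix_mul_assoc trace_mul_sym)
  then show ?thesis
    by (simp add: commutator_def matrix_diff_ldistrib matrix_diff_rdistrib trace_sub matrix_mul_assoc)
qed

lemma trace_commutator_invariant:
  "trace (commutator A U ** V) = - trace (U ** commutator A V)" for A :: "'a::comm_ring_1^'n^'n"
  using trace_commutator_mult[of U A V]
  by (simp add: commutator_antisym[of A U] matrix_minus_left trace_minus)

definition cartan_form :: "'a::comm_ring_1^'n^'n \<Rightarrow> 'a^'n^'n \<Rightarrow> 'a^'n^'n \<Rightarrow> 'a" where
  "cartan_form U V W = trace (commutator U V ** W)"

lemma cartan_form_cyclic: "cartan_form U V W = cartan_form V W U"
  by (metis cartan_form_def trace_commutator_mult trace_mul_sym)

lemma cartan_form_antisym: "cartan_form V U W = - cartan_form U V W"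
  by (simp add: cartan_form_def commutator_antisym[of V U] matrix_minus_left trace_minus)

lemma cartan_form_add:
  "cartan_form U V (W + W') = cartan_form U V W + cartan_form U V W'"
  "cartan_form U (V + V') W = cartan_form U V W + cartan_form U V' W"
  "cartan_form (U + U') V W = cartan_form U V W + cartan_form U' V W"
  by (simp_all add: cartan_form_def matrix_add_ldistrib trace_add commutator_add_left commutator_add_right matrix_add_rdistrib)

lemma cartan_form_diff:
  "cartan_form U V (W - W') = cartan_form U V W - cartan_form U V W'"
  "cartan_form U (V - V') W = cartan_form U V W - cartan_form U V' W"
  "cartan_form (U - U') V W = cartan_form U V W - cartan_form U' V W"
  by (simp_all add: cartan_form_def matrix_diff_ldistrib trace_sub commutator_diff_left commutator_diff_right matrix_diff_rdistrib)

lemma cartan_form_lincomb_right: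
  "cartan_form U V (mat_lincomb a W b W') = a * cartan_form U V W + b * cartan_form U V W'"
  by (simp add: cartan_form_def trace_mult_lincomb)

lemma cartan_form_lincomb:
  "cartan_form U V (mat_lincomb a W b W') = a * cartan_form U V W + b * cartan_form U V W'"
  "cartan_form U (mat_lincomb a W b W') V = a * cartan_form U W V + b * cartan_form U W' V"
  "cartan_form (mat_lincomb a W b W') U V = a * cartan_form W U V + b * cartan_form W' U V"
proof -
  show "cartan_form U V (mat_lincomb a W b W') = a * cartan_form U V W + b * cartan_form U V W'"
    by (rule cartan_form_lincomb_right)
  show "cartan_form U (mat_lincomb a W b W') V = a * cartan_form U W V + b * cartan_form U W' V"
    using cartan_form_cyclic[of U "mat_lincomb a W b W'" V] cartan_form_cyclic[of "mat_lincomb a W b W'" V U]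
      cartan_form_cyclic[of V U W] cartan_form_cyclic[of V U W']
    by (simp add: cartan_form_lincomb_right)
  show "cartan_form (mat_lincomb a W b W') U V = a * cartan_form W U V + b * cartan_form W' U V"
    using cartan_form_cyclic[of "mat_lincomb a W b W'" U V] cartan_form_cyclic[of W U V] cartan_form_cyclic[of W' U V]
    by (simp add: cartan_form_lincomb_right)
qed

lemma cartan_form_ad_invariant:
  "cartan_form U V (commutator A W)
     = - cartan_form (commutator A U) V W - cartan_form U (commutator A V) W"
proof -
  have "cartan_form U V (commutator A W) = - trace (commutator A (commutator U V) ** W)"
    by (simp add: cartan_form_def trace_commutator_invariant)
  then show ?thesis
    by (simp add: cartan_form_def commutator_jacobi[of A U V] matrix_add_rdistrib trace_add)
qed

lemma trace_commutator_mult_commutator_sl2: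
  fixes U V W Z :: "'a::comm_ring_1^2^2"
  assumes "trace U = 0" "trace V = 0" "trace W = 0" "trace Z = 0"
  shows "trace (commutator U V ** commutator W Z)
    = 2 * (trace (U ** Z) * trace (V ** W) - trace (U ** W) * trace (V ** Z))"
proof -
  have traceless: "U$2$2 = - U$1$1" "V$2$2 = - V$1$1" "W$2$2 = - W$1$1" "Z$2$2 = - Z$1$1"
    using assms by (auto simp: trace_def sum_2 add_eq_0_iff)
  have entry: "(A ** B) $ i $ j = A$i$1 * B$1$j + A$i$2 * B$2$j" for A B :: "'a^2^2" and i j
    by (simp add: matrix_matrix_mult_def sum_2)
  show ?thesis
    by (simp add: commutator_def trace_def sum_2 entry traceless) (simp add: algebra_simps)
qed

definition const_coeff :: "slpoly \<Rightarrow> mat2" where "const_coeff \<xi> = \<xi> (0, 0)"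
definition x_coeff :: "slpoly \<Rightarrow> mat2" where "x_coeff \<xi> = \<xi> (1, 0)"
definition y_coeff :: "slpoly \<Rightarrow> mat2" where "y_coeff \<xi> = \<xi> (0, 1)"
definition xx_coeff :: "slpoly \<Rightarrow> mat2" where "xx_coeff \<xi> = \<xi> (2, 0)"

lemma pbracket_x_coeff:
  "x_coeff (pbracket \<xi> \<eta>) = commutator (const_coeff \<xi>) (x_coeff \<eta>) + commutator (x_coeff \<xi>) (const_coeff \<eta>)"
  by (simp add: pbracket_def commutator_def atMost_Suc const_coeff_def x_coeff_def)

lemma pbracket_y_coeff:
  "y_coeff (pbracket \<xi> \<eta>) = commutator (const_coeff \<xi>) (y_coeff \<eta>) + commutator (y_coeff \<xi>) (const_coeff \<eta>)"
  by (simp add: pbracket_def commutator_def atMost_Suc const_coeff_def y_coeff_def)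

lemma pbracket_xx_coeff:
  "xx_coeff (pbracket \<xi> \<eta>) = commutator (const_coeff \<xi>) (xx_coeff \<eta>)
     + commutator (x_coeff \<xi>) (x_coeff \<eta>) + commutator (xx_coeff \<xi>) (const_coeff \<eta>)"
  by (simp add: pbracket_def commutator_def numeral_2_eq_2 atMost_Suc insert_commute
      const_coeff_def x_coeff_def xx_coeff_def)

definition ad_const :: "mat2 \<Rightarrow> slpoly \<Rightarrow> slpoly" where
  "ad_const A \<xi> = (\<lambda>m. commutator A (\<xi> m))"

lemma ad_const_coeff [simp]:
  "x_coeff (ad_const A \<xi>) = commutator A (x_coeff \<xi>)"
  "y_coeff (ad_const A \<xi>) = commutator A (y_coeff \<xi>)"
  "xx_coeff (ad_const A \<xi>) = commutator A (xx_coeff \<xi>)"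
  by (simp_all add: ad_const_def x_coeff_def y_coeff_def xx_coeff_def)

lemma padd_psmul_coeff [simp]:
  "x_coeff (padd (psmul a u) (psmul b v)) = mat_lincomb a (x_coeff u) b (x_coeff v)"
  "y_coeff (padd (psmul a u) (psmul b v)) = mat_lincomb a (y_coeff u) b (y_coeff v)"
  "xx_coeff (padd (psmul a u) (psmul b v)) = mat_lincomb a (xx_coeff u) b (xx_coeff v)"
  by (simp_all add: padd_def psmul_def x_coeff_def y_coeff_def xx_coeff_def mat_lincomb_def vec_eq_iff)

lemma is_cochain_2I:
  assumes linear: "\<And>a b u v w. f [padd (psmul a u) (psmul b v), w] = a * f [u, w] + b * f [v, w]"
    and antisym: "\<And>u v. f [v, u] = - f [u, v]"
  shows "is_cochain 2 f"
  unfolding is_cochain_def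
proof (intro conjI allI impI)
  fix xs :: "slpoly list" and i :: nat and u v a b
  assume "length xs = 2 \<and> set xs \<subseteq> sl2xy \<and> i < 2 \<and> u \<in> sl2xy \<and> v \<in> sl2xy"
  then obtain p q where xs: "xs = [p, q]" and "i = 0 \<or> i = 1"
    by (auto simp: numeral_2_eq_2 length_Suc_conv less_Suc_eq)
  then show "f (xs[i := padd (psmul a u) (psmul b v)]) = a * f (xs[i := u]) + b * f (xs[i := v])"
  proof (elim disjE)
    assume "i = 0"
    then show ?thesis by (simp add: xs linear)
  next
    assume "i = 1"
    then show ?thesis using linear[of a u b v p] antisym[of p] by (simp add: xs)
  qed
next
  fix xs :: "slpoly list" and i j :: nat
  assume "length xs = 2 \<and> set xs \<subseteq> sl2xy \<and> i < j \<and> j < 2 \<and> xs ! i = xs ! j"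
  then obtain p where "xs = [p, p]"
    by (auto simp: numeral_2_eq_2 length_Suc_conv less_Suc_eq)
  then show "f xs = 0"
    using antisym[of p p] by simp
qed

lemma is_cochain_3I:
  assumes linear: "\<And>a b u v w z. f [padd (psmul a u) (psmul b v), w, z] = a * f [u, w, z] + b * f [v, w, z]"
    and antisym: "\<And>u v w. f [v, u, w] = - f [u, v, w]"
    and cyclic: "\<And>u v w. f [v, w, u] = f [u, v, w]"
  shows "is_cochain 3 f"
  unfolding is_cochain_def
proof (intro conjI allI impI)
  fix xs :: "slpoly list" and i :: nat and u v a b
  assume "length xs = 3 \<and> set xs \<subseteq> sl2xy \<and> i < 3 \<and> u \<in> sl2xy \<and> v \<in> sl2xy"
  then obtain p q r where xs: "xs = [p, q, r]" and "i = 0 \<or> i = 1 \<or> i = 2"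
    by (auto simp: numeral_3_eq_3 length_Suc_conv less_Suc_eq)
  then show "f (xs[i := padd (psmul a u) (psmul b v)]) = a * f (xs[i := u]) + b * f (xs[i := v])"
  proof (elim disjE)
    assume "i = 0"
    then show ?thesis by (simp add: xs linear)
  next
    assume "i = 1"
    then show ?thesis using linear[of a u b v r p] by (simp add: xs cyclic[where u = p and w = r, symmetric])
  next
    assume "i = 2"
    then show ?thesis using linear[of a u b v p q] by (simp add: xs cyclic[where v = p and w = q])
  qed
next
  fix xs :: "slpoly list" and i j :: nat
  assume "length xs = 3 \<and> set xs \<subseteq> sl2xy \<and> i < j \<and> j < 3 \<and> xs ! i = xs ! j"
  moreover have repeated_01: "f [p, p, r] = 0" for p r
    using antisym[of p p r] by simp
  moreover have "f [p, q, p] = 0" for p q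
    using repeated_01 cyclic[where u = p and v = p and w = q] by simp
  moreover have "f [p, q, q] = 0" for p q
    using repeated_01 cyclic[where u = p and v = q and w = q] by simp
  ultimately show "f xs = 0"
    by (auto simp: numeral_3_eq_3 length_Suc_conv less_Suc_eq)
qed

lemma greaterThanLessThan_Suc: "{a<..<Suc b} = (if a < b then insert b {a<..<b} else {})"
  by auto

lemma coboundary_2_explicit:
  "coboundary 2 f [p, q, r] = - f [pbracket p q, r] + f [pbracket p r, q] - f [pbracket q r, p]"
  by (simp add: coboundary_def numeral_3_eq_3 lessThan_Suc nths_Cons greaterThanLessThan_Suc)

lemma coboundary_3_explicit:
  "coboundary 3 f [p, q, r, s] =
     - f [pbracket p q, r, s] + f [pbracket p r, q, s] - f [pbracket p s, q, r]
     - f [pbracket q r, p, s] + f [pbracket q s, p, r] - f [pbracket r s, p, q]"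
  by (simp add: coboundary_def numeral_3_eq_3 lessThan_Suc nths_Cons greaterThanLessThan_Suc)

lemma two_element_subsets_of_four:
  "{S. S \<subseteq> {..<2+2::nat} \<and> card S = 2} = {{0,1}, {0,2}, {0,3}, {1,2}, {1,3}, {2,3}}"
proof (rule set_eqI, rule iffI)
  fix S assume "S \<in> {S. S \<subseteq> {..<2+2::nat} \<and> card S = 2}"
  then obtain x y where "S = {x, y}" "x \<noteq> y" "x < 4" "y < 4"
    by (auto simp: card_2_iff)
  then show "S \<in> {{0,1}, {0,2}, {0,3}, {1,2}, {1,3}, {2,3}}"
    by (auto simp: insert_commute less_Suc_eq numeral_eq_Suc)
qed auto

lemma cup_2_2_explicit:
  "cup 2 2 f g [p, q, r, s] =
     f [p, q] * g [r, s] - f [p, r] * g [q, s] + f [p, s] * g [q, r]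
     + f [q, r] * g [p, s] - f [q, s] * g [p, r] + f [r, s] * g [p, q]"
  unfolding cup_def two_element_subsets_of_four
  by (simp add: nths_Cons numeral_eq_Suc doubleton_eq_iff)

lemma c_cochain_eq:
  "c_cochain [u, v] = trace (x_coeff u ** y_coeff v) - trace (x_coeff v ** y_coeff u)"
  using trace_mul_sym[of "u (0, 1)" "v (1, 0)"]
  by (simp add: c_cochain_def trace_sub x_coeff_def y_coeff_def)

lemma c_cochain_antisym: "c_cochain [v, u] = - c_cochain [u, v]"
  by (simp add: c_cochain_eq)

lemma c_cochain_is_cochain: "is_cochain 2 c_cochain"
proof (rule is_cochain_2I)
  show "c_cochain [padd (psmul a u) (psmul b v), w] = a * c_cochain [u, w] + b * c_cochain [v, w]"
    for a b u v w
    by (simp add: c_cochain_eq trace_lincomb_mult trace_mult_lincomb right_diff_distrib)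
qed (fact c_cochain_antisym)

lemma c_cochain_ad_invariant: "c_cochain [ad_const A u, v] + c_cochain [u, ad_const A v] = 0"
  by (simp add: c_cochain_eq trace_commutator_invariant)

lemma c_cochain_pbracket:
  "c_cochain [pbracket u v, w] =
     c_cochain [ad_const (const_coeff u) v, w] - c_cochain [ad_const (const_coeff v) u, w]"
  by (simp add: c_cochain_eq pbracket_x_coeff pbracket_y_coeff
      commutator_antisym[of "x_coeff u"] commutator_antisym[of "y_coeff u"]
      matrix_add_rdistrib matrix_diff_rdistrib matrix_add_ldistrib matrix_diff_ldistrib trace_add trace_sub)

lemma c_cochain_ad_symmetric: "c_cochain [ad_const A v, w] = c_cochain [ad_const A w, v]"
proof -
  have "c_cochain [ad_const A v, w] = - c_cochain [v, ad_const A w]"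
    using c_cochain_ad_invariant[of A v w] by (simp add: eq_neg_iff_add_eq_0)
  also have "\<dots> = c_cochain [ad_const A w, v]"
    using c_cochain_antisym[of v "ad_const A w"] by simp
  finally show ?thesis .
qed

lemma c_cochain_cocycle: "coboundary 2 c_cochain [p, q, r] = 0"
  by (simp add: coboundary_2_explicit c_cochain_pbracket c_cochain_ad_symmetric)

definition c_square_primitive :: "slpoly list \<Rightarrow> complex" where
  "c_square_primitive xs =
     - (cartan_form (y_coeff (xs ! 0)) (y_coeff (xs ! 1)) (xx_coeff (xs ! 2))
      + cartan_form (y_coeff (xs ! 2)) (y_coeff (xs ! 0)) (xx_coeff (xs ! 1))
      + cartan_form (y_coeff (xs ! 1)) (y_coeff (xs ! 2)) (xx_coeff (xs ! 0)))"

lemma c_square_primitive_antisym: "c_square_primitive [v, u, w] = - c_square_primitive [u, v, w]"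
  by (simp add: c_square_primitive_def cartan_form_antisym[of "y_coeff v" "y_coeff u"]
      cartan_form_antisym[of "y_coeff w" "y_coeff v"] cartan_form_antisym[of "y_coeff u" "y_coeff w"])

lemma c_square_primitive_cyclic: "c_square_primitive [v, w, u] = c_square_primitive [u, v, w]"
  by (simp add: c_square_primitive_def algebra_simps)

lemma c_square_primitive_is_cochain: "is_cochain 3 c_square_primitive"
proof (rule is_cochain_3I)
  show "c_square_primitive [padd (psmul a u) (psmul b v), w, z]
      = a * c_square_primitive [u, w, z] + b * c_square_primitive [v, w, z]" for a b u v w z
    by (simp add: c_square_primitive_def cartan_form_lincomb algebra_simps)
qed (fact c_square_primitive_antisym c_square_primitive_cyclic)+

lemma c_square_primitive_ad_invariant:
  "c_square_primitive [ad_const A u, v, w] + c_square_primitive [u, ad_const A v, w]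
     + c_square_primitive [u, v, ad_const A w] = 0"
  by (simp add: c_square_primitive_def cartan_form_ad_invariant)

lemma c_square_primitive_pbracket:
  "c_square_primitive [pbracket u v, w, z] =
     c_square_primitive [ad_const (const_coeff u) v, w, z] - c_square_primitive [ad_const (const_coeff v) u, w, z]
     - trace (commutator (y_coeff w) (y_coeff z) ** commutator (x_coeff u) (x_coeff v))"
  by (simp add: c_square_primitive_def pbracket_y_coeff pbracket_xx_coeff
      commutator_antisym[of "y_coeff u"] commutator_antisym[of "xx_coeff u"]
      cartan_form_add cartan_form_diff)
     (simp add: cartan_form_def)

lemma c_square_primitive_ad_alternating:
  "c_square_primitive [ad_const A u, v, w]
     = c_square_primitive [ad_const A v, u, w] - c_square_primitive [ad_const A w, u, v]"
  using c_square_primitive_ad_invariant[of A u v w]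
    c_square_primitive_antisym[of "ad_const A v" u w] c_square_primitive_cyclic[of u v "ad_const A w"]
  by algebra

lemma coboundary_c_square_primitive:
  fixes p q r s :: slpoly
  defines "T k l i j \<equiv> trace (commutator (y_coeff k) (y_coeff l) ** commutator (x_coeff i) (x_coeff j))"
  shows "coboundary 3 c_square_primitive [p, q, r, s] =
    T r s p q - T q s p r + T q r p s + T p s q r - T p r q s + T p q r s"
  unfolding T_def
  by (simp add: coboundary_3_explicit c_square_primitive_pbracket
      c_square_primitive_ad_alternating[of "const_coeff p" q r s]
      c_square_primitive_ad_alternating[of "const_coeff q" p r s]
      c_square_primitive_ad_alternating[of "const_coeff r" p q s]
      c_square_primitive_ad_alternating[of "const_coeff s" p q r])

lemma cup_square_c_cochain_eq_coboundary:
  assumes "p \<in> sl2xy" "q \<in> sl2xy" "r \<in> sl2xy" "s \<in> sl2xy"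
  shows "cup 2 2 c_cochain c_cochain [p, q, r, s] = coboundary 3 c_square_primitive [p, q, r, s]"
proof -
  have traceless: "trace (x_coeff u) = 0" "trace (y_coeff u) = 0" if "u \<in> sl2xy" for u
    using that by (simp_all add: sl2xy_def x_coeff_def y_coeff_def)
  have sl2: "trace (commutator (y_coeff k) (y_coeff l) ** commutator (x_coeff i) (x_coeff j))
      = 2 * (trace (x_coeff j ** y_coeff k) * trace (x_coeff i ** y_coeff l)
           - trace (x_coeff i ** y_coeff k) * trace (x_coeff j ** y_coeff l))"
    if "k \<in> sl2xy" "l \<in> sl2xy" "i \<in> sl2xy" "j \<in> sl2xy" for k l i j
    using that by (simp add: trace_commutator_mult_commutator_sl2 traceless
        trace_mul_sym[of "y_coeff k"] trace_mul_sym[of "y_coeff l"])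
  show ?thesis
    by (simp add: cup_2_2_explicit coboundary_c_square_primitive c_cochain_eq sl2 assms algebra_simps)
qed

theorem proposition3p6:
  shows "is_cochain 2 c_cochain
    \<and> (\<forall>xs. length xs = 3 \<and> set xs \<subseteq> sl2xy \<longrightarrow> coboundary 2 c_cochain xs = 0)
    \<and> (\<exists>b. is_cochain 3 b \<and>
         (\<forall>xs. length xs = 4 \<and> set xs \<subseteq> sl2xy \<longrightarrow>
              cup 2 2 c_cochain c_cochain xs = coboundary 3 b xs))"
proof (intro conjI allI impI exI[of _ c_square_primitive])
  show "is_cochain 2 c_cochain" by (rule c_cochain_is_cochain)
  show "is_cochain 3 c_square_primitive" by (rule c_square_primitive_is_cochain)
next
  fix xs :: "slpoly list"
  assume "length xs = 3 \<and> set xs \<subseteq> sl2xy"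
  then obtain p q r where "xs = [p, q, r]"
    by (auto simp: numeral_3_eq_3 length_Suc_conv)
  then show "coboundary 2 c_cochain xs = 0"
    by (simp add: c_cochain_cocycle)
next
  fix xs :: "slpoly list"
  assume "length xs = 4 \<and> set xs \<subseteq> sl2xy"
  then obtain p q r s where "xs = [p, q, r, s]" "p \<in> sl2xy" "q \<in> sl2xy" "r \<in> sl2xy" "s \<in> sl2xy"
    by (auto simp: numeral_eq_Suc length_Suc_conv)
  then show "cup 2 2 c_cochain c_cochain xs = coboundary 3 c_square_primitive xs"
    by (simp add: cup_square_c_cochain_eq_coboundary)
qed

end
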